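(* Let $A(\underline{y})$ and $B(\underline{y})$ be smooth $\mathbb{R}_{0,m}$-valued functions depending only on $\underline{y}$. The function $$F(X)=\exp(z)A(\underline{y})+\exp(\overline{z})B(\underline{y})$$ is two-sided monogenic if and only if $A$ is harmonic and satisfies $A+e_1Ae_1+A\partial_{\underline{y}}=0$, and $B$ is a left monogenic function (i.e. $\partial_{\underline{y}}B=0$) of the form $B=-\frac{1}{2}\partial_{\underline{y}}A$. In particular, if $M(\underline{y})$ is a right monogenic function of $\underline{y}$ (i.e. $M\partial_{\underline{y}}=0$), then $$\exp(z)\big(M(\underline{y})-e_1M(\underline{y})e_1\big)-\frac{1}{2}\exp(\overline{z})\big(\partial_{\underline{y}}M(\underline{y})+e_1\partial_{\underline{y}}M(\underline{y})e_1\big)$$ is two-sided monogenic.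
   Context: Let $m\ge 2$ and let $\mathbb{R}_{0,m}$ be the real Clifford algebra generated by $e_1,\dots,e_m$ with $e_i^2=-1$ and $e_ie_j=-e_je_i$ for $i\neq j$; all products are Clifford products. Identify $(x_0,\dots,x_m)\in\mathbb{R}^{m+1}$ with $X=x_0+\sum_{j=1}^m x_je_j$, and write $z=x_0+x_1e_1$, $\overline{z}=x_0-x_1e_1$, $\underline{y}=\sum_{j=2}^m x_je_j$ (identified with $(x_2,\dots,x_m)\in\mathbb{R}^{m-1}$). The subalgebra spanned by $1,e_1$ is identified with $\mathbb{C}$ via $i\mapsto e_1$, so $\exp(z)=e^{x_0}(\cos x_1+e_1\sin x_1)$ and $\exp(\overline{z})=e^{x_0}(\cos x_1-e_1\sin x_1)$. Operators: $\partial_X f=\partial_{x_0}f+\sum_{j=1}^m e_j\partial_{x_j}f$, $f\partial_X=\partial_{x_0}f+\sum_{j=1}^m(\partial_{x_j}f)e_j$, $\partial_{\underline{y}}f=\sum_{j=2}^m e_j\partial_{x_j}f$, $f\partial_{\underline{y}}=\sum_{j=2}^m(\partial_{x_j}f)e_j$. A function $f$ is left monogenic if $\partial_Xf=0$, right monogenic if $f\partial_X=0$, two-sided monogenic if both hold; for functions of $\underline{y}$ alone, left/right monogenic means $\partial_{\underline{y}}f=0$ / $f\partial_{\underline{y}}=0$. Harmonic means $\Delta A=0$ where $\Delta=\sum_{j=2}^m\partial_{x_j}^2=-\partial_{\underline{y}}^2$. *)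

theory Defs
  imports "HOL-Analysis.Analysis" "HOL-Library.Option_ord"
begin

text \<open>The generators of R_{0,m} are indexed by the type 'k option,
  where None stands for e_1 and Some k (k :: 'k) stand for e_2,...,e_m; the order
  is None < Some k. Thus m = CARD('k) + 1 >= 2. A Clifford number is a real vector
  indexed by the subsets S of generators (coefficient of the blade e_S, generators
  multiplied in increasing order; the empty blade is 1).\<close>

type_synonym 'k clif = "real ^ ('k option set)"

definition blade_sign :: "('k::linorder) option set \<Rightarrow> 'k option set \<Rightarrow> real" where
  "blade_sign S T = (-1) ^ (card {(s,t). s \<in> S \<and> t \<in> T \<and> t < s} + card (S \<inter> T))"

definition clmul :: "('k::{finite,linorder}) clif \<Rightarrow> 'k clif \<Rightarrow> 'k clif" (infixl "\<odot>" 70) where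
  "a \<odot> b = (\<chi> C. \<Sum>S\<in>UNIV. \<Sum>T\<in>UNIV.
      if (S - T) \<union> (T - S) = C then blade_sign S T * (a $ S) * (b $ T) else 0)"

definition clsc :: "real \<Rightarrow> ('k::finite) clif" where
  "clsc r = (\<chi> C. if C = {} then r else 0)"

definition gen :: "('k::finite) option \<Rightarrow> 'k clif" where
  "gen i = (\<chi> C. if C = {i} then 1 else 0)"

text \<open>exp(z) and exp(conj z) with z = x0 + x1 e_1\<close>
definition exp_z :: "real \<Rightarrow> real \<Rightarrow> ('k::finite) clif" where
  "exp_z x0 x1 = exp x0 *\<^sub>R (clsc (cos x1) + sin x1 *\<^sub>R gen None)"

definition exp_zbar :: "real \<Rightarrow> real \<Rightarrow> ('k::finite) clif" where
  "exp_zbar x0 x1 = exp x0 *\<^sub>R (clsc (cos x1) - sin x1 *\<^sub>R gen None)"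

definition pd :: "('a::real_normed_vector \<Rightarrow> 'b::real_normed_vector) \<Rightarrow> 'a \<Rightarrow> 'a \<Rightarrow> 'b" where
  "pd f p d = vector_derivative (\<lambda>t. f (p + t *\<^sub>R d)) (at 0)"

fun iter_pd :: "('a::real_normed_vector \<Rightarrow> 'b::real_normed_vector) \<Rightarrow> 'a list \<Rightarrow> 'a \<Rightarrow> 'b" where
  "iter_pd f [] = f"
| "iter_pd f (d # ds) = (\<lambda>x. pd (iter_pd f ds) x d)"

definition smooth :: "('a::real_normed_vector \<Rightarrow> 'b::real_normed_vector) \<Rightarrow> bool" where
  "smooth f \<longleftrightarrow> (\<forall>ds x. continuous (at x) (iter_pd f ds) \<and>
       (\<forall>d. (\<lambda>t. iter_pd f ds (x + t *\<^sub>R d)) differentiable (at 0)))"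

text \<open>Operators on functions of y = (x_2,...,x_m) :: (real, 'k) vec\<close>
definition dy :: "('k::{finite,linorder}) \<Rightarrow> ((real, 'k) vec \<Rightarrow> 'k clif) \<Rightarrow> (real, 'k) vec \<Rightarrow> 'k clif" where
  "dy k f y = pd f y (axis k (1::real))"

definition left_dirac_y :: "((real, 'k::{finite,linorder}) vec \<Rightarrow> 'k clif) \<Rightarrow> (real, 'k) vec \<Rightarrow> 'k clif" where
  "left_dirac_y f y = (\<Sum>k\<in>UNIV. gen (Some k) \<odot> dy k f y)"

definition right_dirac_y :: "((real, 'k::{finite,linorder}) vec \<Rightarrow> 'k clif) \<Rightarrow> (real, 'k) vec \<Rightarrow> 'k clif" where
  "right_dirac_y f y = (\<Sum>k\<in>UNIV. dy k f y \<odot> gen (Some k))"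

definition harmonic :: "((real, 'k::{finite,linorder}) vec \<Rightarrow> 'k clif) \<Rightarrow> bool" where
  "harmonic f \<longleftrightarrow> (\<forall>y. (\<Sum>k\<in>UNIV. dy k (dy k f) y) = 0)"

definition left_dirac :: "(real \<times> real \<times> (real, 'k::{finite,linorder}) vec \<Rightarrow> 'k clif) \<Rightarrow> real \<times> real \<times> (real, 'k) vec \<Rightarrow> 'k clif" where
  "left_dirac F p = pd F p (1, 0, 0) + gen None \<odot> pd F p (0, 1, 0)
     + (\<Sum>k\<in>UNIV. gen (Some k) \<odot> pd F p (0, 0, axis k 1))"

definition right_dirac :: "(real \<times> real \<times> (real, 'k::{finite,linorder}) vec \<Rightarrow> 'k clif) \<Rightarrow> real \<times> real \<times> (real, 'k) vec \<Rightarrow> 'k clif" where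
  "right_dirac F p = pd F p (1, 0, 0) + pd F p (0, 1, 0) \<odot> gen None
     + (\<Sum>k\<in>UNIV. pd F p (0, 0, axis k 1) \<odot> gen (Some k))"

definition two_sided_monogenic :: "(real \<times> real \<times> (real, 'k::{finite,linorder}) vec \<Rightarrow> 'k clif) \<Rightarrow> bool" where
  "two_sided_monogenic F \<longleftrightarrow> (\<forall>p. left_dirac F p = 0) \<and> (\<forall>p. right_dirac F p = 0)"

end

theory Submission
  imports Defs
begin

text \<open>Both Dirac operators map F = exp(z) A + exp(conj z) B to a function of the same shape
  exp(z) P + exp(conj z) Q with P, Q depending on y only: exp(z) is its own x0-derivative, its
  x1-derivative is exp(z) e1, it commutes with e1, and e_k exp(z) = exp(conj z) e_k for k >= 2.
  Such a function vanishes identically iff P = Q = 0, so F is two-sided monogenic iff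
  D B = 0, 2 B + D A = 0, A + e1 A e1 + A D = 0 and B - e1 B e1 + B D = 0, where D is the
  Dirac operator in y acting from the left or from the right. By Schwarz's theorem
  D (D A) = (A D) D = - Laplace A and D (A D) = (D A) D for smooth A. Hence, once B = - D A / 2,
  the equation D B = 0 says that A is harmonic, and the last equation is obtained by applying D
  to the third one. For the second statement, A = M - e1 M e1 satisfies A + e1 A e1 = 0 and
  A D = M D + e1 (M D) e1 = 0, hence also Laplace A = - (A D) D = 0.\<close>

section \<open>Clifford multiplication\<close>

lemma neg_one_power_card_sym_diff:
  assumes "finite A" "finite B"
  shows "(-1::real) ^ card (sym_diff A B) = (-1) ^ card A * (-1) ^ card B"
proof -
  have "card A = card (A - B) + card (A \<inter> B)" "card B = card (B - A) + card (A \<inter> B)"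
    using assms by (simp_all add: card_Int_Diff[of A B] card_Int_Diff[of B A] Int_commute)
  moreover have "card (sym_diff A B) = card (A - B) + card (B - A)"
    using assms by (subst card_Un_disjoint) auto
  ultimately show ?thesis by (simp add: power_add)
qed

lemma blade_sign_sym_diff_left:
  fixes S T U :: "('k::{finite,linorder}) option set"
  shows "blade_sign (sym_diff S T) U = blade_sign S U * blade_sign T U"
proof -
  let ?inv = "\<lambda>S. {(s, t). s \<in> S \<and> t \<in> U \<and> t < s}"
  have "?inv (sym_diff S T) = sym_diff (?inv S) (?inv T)" "sym_diff S T \<inter> U = sym_diff (S \<inter> U) (T \<inter> U)"
    by auto
  then show ?thesis
    by (simp add: blade_sign_def power_add neg_one_power_card_sym_diff)
qed

lemma blade_sign_sym_diff_right:
  fixes S T U :: "('k::{finite,linorder}) option set"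
  shows "blade_sign S (sym_diff T U) = blade_sign S T * blade_sign S U"
proof -
  let ?inv = "\<lambda>T. {(s, t). s \<in> S \<and> t \<in> T \<and> t < s}"
  have "?inv (sym_diff T U) = sym_diff (?inv T) (?inv U)" "S \<inter> sym_diff T U = sym_diff (S \<inter> T) (S \<inter> U)"
    by auto
  then show ?thesis
    by (simp add: blade_sign_def power_add neg_one_power_card_sym_diff)
qed

lemma clmul_nth:
  "(a \<odot> b) $ C = (\<Sum>S\<in>UNIV. \<Sum>T\<in>UNIV. (if sym_diff S T = C then blade_sign S T else 0) * a $ S * b $ T)"
  by (auto simp: clmul_def intro!: sum.cong)

lemma bilinear_clmul: "bilinear (clmul :: ('k::{finite,linorder}) clif \<Rightarrow> _)"
  by (auto simp: bilinear_def vec_eq_iff clmul_nth algebra_simps sum.distrib sum_distrib_left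
      intro!: linearI)

interpretation clmul: bounded_bilinear "clmul :: ('k::{finite,linorder}) clif \<Rightarrow> _"
  using bilinear_clmul by (simp add: bilinear_conv_bounded_bilinear)

declare clmul.zero_left [simp] clmul.zero_right [simp]

lemma clmul_axis_axis:
  "axis S 1 \<odot> axis T 1 = blade_sign S T *\<^sub>R (axis (sym_diff S T) 1 :: ('k::{finite,linorder}) clif)"
proof -
  have "(if sym_diff S' T' = C then blade_sign S' T' * axis S 1 $ S' * axis T 1 $ T' else 0)
      = (if T' = T then if S' = S then blade_sign S T * axis (sym_diff S T) 1 $ C else 0 else 0)"
    for S' T' C :: "'k option set"
    by (simp add: axis_def)
  then show ?thesis by (simp add: clmul_def vec_eq_iff)
qed

text \<open>Both sides are blade_sign S T * blade_sign S U * blade_sign T U times the same blade.\<close>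

lemma clmul_assoc_axis:
  "(axis S 1 \<odot> axis T 1) \<odot> axis U 1 = axis S 1 \<odot> (axis T 1 \<odot> (axis U 1 :: ('k::{finite,linorder}) clif))"
proof -
  have "sym_diff (sym_diff S T) U = sym_diff S (sym_diff T U)" by blast
  then show ?thesis
    by (simp add: clmul_axis_axis clmul.scaleR_left clmul.scaleR_right
        blade_sign_sym_diff_left blade_sign_sym_diff_right)
qed

lemma clmul_assoc: "(a \<odot> b) \<odot> c = a \<odot> (b \<odot> (c :: ('k::{finite,linorder}) clif))"
  by (subst (1 2) basis_expansion[of a, symmetric], subst (1 2) basis_expansion[of b, symmetric],
      subst (1 2) basis_expansion[of c, symmetric])
    (simp add: scalar_mult_eq_scaleR clmul.sum_left clmul.sum_right clmul.scaleR_left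
      clmul.scaleR_right scaleR_sum_right clmul_assoc_axis mult.assoc)

lemma clsc_eq_scaleR: "clsc r = r *\<^sub>R clsc 1"
  by (simp add: clsc_def vec_eq_iff)

lemma clsc_one_eq_axis: "clsc 1 = axis {} 1"
  by (simp add: clsc_def axis_def vec_eq_iff)

lemma gen_eq_axis: "gen i = axis {i} 1"
  by (simp add: gen_def axis_def vec_eq_iff)

lemma clsc_one_clmul [simp]: "clsc 1 \<odot> a = (a :: ('k::{finite,linorder}) clif)"
  by (subst (1 2) basis_expansion[of a, symmetric])
    (simp add: clsc_one_eq_axis scalar_mult_eq_scaleR clmul.sum_right clmul.scaleR_right
      clmul_axis_axis blade_sign_def)

lemma clmul_clsc_one [simp]: "a \<odot> clsc 1 = (a :: ('k::{finite,linorder}) clif)"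
  by (subst (1 2) basis_expansion[of a, symmetric])
    (simp add: clsc_one_eq_axis scalar_mult_eq_scaleR clmul.sum_left clmul.scaleR_left
      clmul_axis_axis blade_sign_def)

lemma gen_clmul_gen:
  "gen i \<odot> gen j = (if i = j then - clsc 1 else - (gen j \<odot> gen i :: ('k::{finite,linorder}) clif))"
proof -
  have "blade_sign {i} {j} = (if i = j then -1 else if j < i then -1 else 1)" for i j :: "'k option"
  proof -
    have "{(s, t). s = i \<and> t = j \<and> t < s} = (if j < i then {(i, j)} else {})" by auto
    then show ?thesis by (auto simp: blade_sign_def)
  qed
  then show ?thesis
    by (auto simp: gen_eq_axis clsc_one_eq_axis clmul_axis_axis Un_commute)
qed

lemma gen_clmul_gen_self [simp]:
  "gen i \<odot> gen i = - (clsc 1 :: ('k::{finite,linorder}) clif)"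
  "gen i \<odot> (gen i \<odot> a) = - a"
  by (simp_all add: gen_clmul_gen clmul_assoc[symmetric] clmul.minus_left)

lemma gen_Some_clmul_gen_None [simp]:
  "gen (Some k) \<odot> gen None = - (gen None \<odot> gen (Some k) :: ('k::{finite,linorder}) clif)"
  "gen (Some k) \<odot> (gen None \<odot> a) = - (gen None \<odot> (gen (Some k) \<odot> a))"
  by (simp_all add: gen_clmul_gen[of "Some k" None] clmul_assoc[symmetric] clmul.minus_left)

lemma gen_anticommutator:
  "gen i \<odot> gen j + gen j \<odot> gen i
    = (if i = j then - (clsc 1 + clsc 1) else (0 :: ('k::{finite,linorder}) clif))"
  by (cases "i = j") (simp_all add: gen_clmul_gen[of i j] gen_clmul_gen[of j j])

lemma double_sum_symmetrize:
  "(\<Sum>k\<in>I. \<Sum>l\<in>I. f k l) + (\<Sum>k\<in>I. \<Sum>l\<in>I. f k l)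
    = (\<Sum>k\<in>I. \<Sum>l\<in>I. f k l + f l k :: 'a::comm_monoid_add)"
  by (subst (2) sum.swap) (simp add: sum.distrib)

lemma add_self_eq_iff: "x + x = y + y \<longleftrightarrow> x = (y :: 'a::real_vector)"
  by (metis scaleR_2 scaleR_cancel_left zero_neq_numeral)

lemma gen_double_sum_left:
  fixes D :: "'k::{finite,linorder} \<Rightarrow> 'k \<Rightarrow> 'k clif"
  assumes sym: "\<And>k l. D k l = D l k"
  shows "(\<Sum>k\<in>UNIV. \<Sum>l\<in>UNIV. gen (Some k) \<odot> (gen (Some l) \<odot> D k l)) = - (\<Sum>k\<in>UNIV. D k k)"
proof -
  have pair: "gen (Some k) \<odot> (gen (Some l) \<odot> D k l) + gen (Some l) \<odot> (gen (Some k) \<odot> D l k)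
      = (if k = l then - (D k k + D k k) else 0)" for k l
  proof -
    have "gen (Some k) \<odot> (gen (Some l) \<odot> D k l) + gen (Some l) \<odot> (gen (Some k) \<odot> D l k)
        = (gen (Some k) \<odot> gen (Some l) + gen (Some l) \<odot> gen (Some k)) \<odot> D k l"
      by (simp only: sym[of l k] clmul_assoc clmul.add_left)
    then show ?thesis
      by (cases "k = l") (simp_all only: gen_anticommutator option.inject simp_thms if_True if_False
          clmul.minus_left clmul.add_left clsc_one_clmul clmul.zero_left)
  qed
  have "(\<Sum>k\<in>UNIV. \<Sum>l\<in>UNIV. gen (Some k) \<odot> (gen (Some l) \<odot> D k l))
      + (\<Sum>k\<in>UNIV. \<Sum>l\<in>UNIV. gen (Some k) \<odot> (gen (Some l) \<odot> D k l))
      = - (\<Sum>k\<in>UNIV. D k k) + - (\<Sum>k\<in>UNIV. D k k)"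
    by (simp add: double_sum_symmetrize pair sum.distrib sum_negf sum_distrib_left)
  then show ?thesis by (simp only: add_self_eq_iff)
qed

lemma gen_double_sum_right:
  fixes D :: "'k::{finite,linorder} \<Rightarrow> 'k \<Rightarrow> 'k clif"
  assumes sym: "\<And>k l. D k l = D l k"
  shows "(\<Sum>k\<in>UNIV. \<Sum>l\<in>UNIV. D k l \<odot> (gen (Some l) \<odot> gen (Some k))) = - (\<Sum>k\<in>UNIV. D k k)"
proof -
  have pair: "D k l \<odot> (gen (Some l) \<odot> gen (Some k)) + D l k \<odot> (gen (Some k) \<odot> gen (Some l))
      = (if k = l then - (D k k + D k k) else 0)" for k l
  proof -
    have "D k l \<odot> (gen (Some l) \<odot> gen (Some k)) + D l k \<odot> (gen (Some k) \<odot> gen (Some l))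
        = D k l \<odot> (gen (Some l) \<odot> gen (Some k) + gen (Some k) \<odot> gen (Some l))"
      by (simp only: sym[of l k] clmul.add_right)
    then show ?thesis
      by (cases "k = l") (simp_all only: gen_anticommutator option.inject eq_commute[of l k] simp_thms
          if_True if_False clmul.minus_right clmul.add_right clmul_clsc_one clmul.zero_right)
  qed
  have "(\<Sum>k\<in>UNIV. \<Sum>l\<in>UNIV. D k l \<odot> (gen (Some l) \<odot> gen (Some k)))
      + (\<Sum>k\<in>UNIV. \<Sum>l\<in>UNIV. D k l \<odot> (gen (Some l) \<odot> gen (Some k)))
      = - (\<Sum>k\<in>UNIV. D k k) + - (\<Sum>k\<in>UNIV. D k k)"
    by (simp add: double_sum_symmetrize pair sum.distrib sum_negf sum_distrib_left)
  then show ?thesis by (simp only: add_self_eq_iff)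
qed

section \<open>Directional derivatives and smooth functions\<close>

definition has_pd ::
  "('a::real_normed_vector \<Rightarrow> 'b::real_normed_vector) \<Rightarrow> 'a \<Rightarrow> 'a \<Rightarrow> 'b \<Rightarrow> bool" where
  "has_pd f x d v \<longleftrightarrow> ((\<lambda>t. f (x + t *\<^sub>R d)) has_vector_derivative v) (at 0)"

lemma pd_eqI: "has_pd f x d v \<Longrightarrow> pd f x d = v"
  unfolding has_pd_def pd_def by (rule vector_derivative_at)

lemma has_pd_const: "has_pd (\<lambda>z. c) x d 0"
  unfolding has_pd_def by simp

lemma has_pd_add: "has_pd f x d v \<Longrightarrow> has_pd g x d w \<Longrightarrow> has_pd (\<lambda>z. f z + g z) x d (v + w)"
  unfolding has_pd_def by (rule has_vector_derivative_add)

lemma has_pd_diff: "has_pd f x d v \<Longrightarrow> has_pd g x d w \<Longrightarrow> has_pd (\<lambda>z. f z - g z) x d (v - w)"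
  unfolding has_pd_def by (rule has_vector_derivative_diff)

lemma has_pd_sum:
  "(\<And>i. i \<in> I \<Longrightarrow> has_pd (f i) x d (v i)) \<Longrightarrow> has_pd (\<lambda>z. \<Sum>i\<in>I. f i z) x d (\<Sum>i\<in>I. v i)"
  unfolding has_pd_def by (rule has_vector_derivative_sum)

lemma has_pd_bounded_linear:
  "bounded_linear L \<Longrightarrow> has_pd f x d v \<Longrightarrow> has_pd (\<lambda>z. L (f z)) x d (L v)"
  unfolding has_pd_def by (rule bounded_linear.has_vector_derivative)

lemma has_pd_minus: "has_pd f x d v \<Longrightarrow> has_pd (\<lambda>z. - f z) x d (- v)"
  by (rule has_pd_bounded_linear[OF bounded_linear_minus[OF bounded_linear_ident]])

lemma has_pd_scaleR: "has_pd f x d v \<Longrightarrow> has_pd (\<lambda>z. c *\<^sub>R f z) x d (c *\<^sub>R v)"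
  by (rule has_pd_bounded_linear[OF bounded_linear_scaleR_right])

lemma has_pd_clmul_left: "has_pd f x d v \<Longrightarrow> has_pd (\<lambda>z. c \<odot> f z) x d (c \<odot> v)"
  by (rule has_pd_bounded_linear[OF clmul.bounded_linear_right])

lemma has_pd_clmul_right: "has_pd f x d v \<Longrightarrow> has_pd (\<lambda>z. f z \<odot> c) x d (v \<odot> c)"
  by (rule has_pd_bounded_linear[OF clmul.bounded_linear_left])

lemma has_pd_vec_nth: "has_pd f x d v \<Longrightarrow> has_pd (\<lambda>z. f z $ i) x d (v $ i)"
  by (rule has_pd_bounded_linear[OF bounded_linear_vec_nth])

lemmas has_pd_intros = has_pd_add has_pd_diff has_pd_minus has_pd_scaleR has_pd_sum
  has_pd_clmul_left has_pd_clmul_right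

lemma iter_pd_append: "iter_pd f (ds @ [d]) = iter_pd (\<lambda>x. pd f x d) ds"
  by (induction ds) simp_all

lemma smooth_pd: "smooth f \<Longrightarrow> smooth (\<lambda>x. pd f x d)"
  unfolding smooth_def by (metis iter_pd_append)

lemma smooth_has_pd_iter: "smooth f \<Longrightarrow> has_pd (iter_pd f ds) x d (pd (iter_pd f ds) x d)"
  unfolding smooth_def has_pd_def pd_def by (simp add: vector_derivative_works[symmetric])

lemma smooth_has_pd: "smooth f \<Longrightarrow> has_pd f x d (pd f x d)"
  using smooth_has_pd_iter[of f "[]"] by simp

lemma smooth_continuous: "smooth f \<Longrightarrow> continuous (at x) f"
  unfolding smooth_def by (metis iter_pd.simps(1))

lemma smooth_bounded_linear:
  assumes L: "bounded_linear L" and f: "smooth f"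
  shows "smooth (\<lambda>x. L (f x))"
proof -
  have iter: "iter_pd (\<lambda>x. L (f x)) ds = (\<lambda>x. L (iter_pd f ds x))" for ds
    by (induction ds) (auto intro!: pd_eqI has_pd_bounded_linear[OF L] smooth_has_pd_iter[OF f])
  have "has_pd (\<lambda>x. L (iter_pd f ds x)) x d (L (pd (iter_pd f ds) x d))" for ds x d
    by (intro has_pd_bounded_linear[OF L] smooth_has_pd_iter[OF f])
  moreover have "continuous (at x) (\<lambda>x. L (iter_pd f ds x))" for ds x
    using f unfolding smooth_def by (blast intro: bounded_linear.continuous[OF L])
  ultimately show ?thesis
    unfolding smooth_def iter has_pd_def by (blast intro: differentiableI_vector)
qed

lemma has_pd_along_line:
  fixes g :: "'a::real_normed_vector \<Rightarrow> real"
  assumes "\<And>z. has_pd g z u (g' z)"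
  shows "((\<lambda>s. g (w + s *\<^sub>R u)) has_real_derivative g' (w + r *\<^sub>R u)) (at r)"
proof -
  have "((\<lambda>t. g ((w + r *\<^sub>R u) + t *\<^sub>R u)) has_real_derivative g' (w + r *\<^sub>R u)) (at 0)"
    using assms unfolding has_pd_def has_real_derivative_iff_has_vector_derivative .
  then show ?thesis
    using DERIV_shift[of "\<lambda>s. g (w + s *\<^sub>R u)" _ 0 r] by (simp add: scaleR_add_left add_ac)
qed

lemma second_difference_mean_value:
  fixes g :: "'a::real_normed_vector \<Rightarrow> real"
  assumes gu: "\<And>z. has_pd g z u (gu z)" and guv: "\<And>z. has_pd gu z v (guv z)" and h: "0 < h"
  obtains s t where "0 < s" "s < h" "0 < t" "t < h"
    "g (x + h *\<^sub>R u + h *\<^sub>R v) - g (x + h *\<^sub>R u) - g (x + h *\<^sub>R v) + g x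
      = h * h * guv (x + s *\<^sub>R u + t *\<^sub>R v)"
proof -
  obtain s where s: "0 < s" "s < h"
    and "(g ((x + h *\<^sub>R v) + h *\<^sub>R u) - g (x + h *\<^sub>R u))
        - (g ((x + h *\<^sub>R v) + 0 *\<^sub>R u) - g (x + 0 *\<^sub>R u))
      = (h - 0) * (gu ((x + h *\<^sub>R v) + s *\<^sub>R u) - gu (x + s *\<^sub>R u))"
    using MVT2[OF h, of "\<lambda>r. g ((x + h *\<^sub>R v) + r *\<^sub>R u) - g (x + r *\<^sub>R u)"
        "\<lambda>r. gu ((x + h *\<^sub>R v) + r *\<^sub>R u) - gu (x + r *\<^sub>R u)"]
      DERIV_diff[OF has_pd_along_line[OF gu] has_pd_along_line[OF gu]] by blast
  then have s_eq: "g (x + h *\<^sub>R u + h *\<^sub>R v) - g (x + h *\<^sub>R u) - g (x + h *\<^sub>R v) + g x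
      = h * (gu ((x + s *\<^sub>R u) + h *\<^sub>R v) - gu ((x + s *\<^sub>R u) + 0 *\<^sub>R v))"
    by (simp add: algebra_simps)
  obtain t where "0 < t" "t < h"
    and "gu ((x + s *\<^sub>R u) + h *\<^sub>R v) - gu ((x + s *\<^sub>R u) + 0 *\<^sub>R v)
      = (h - 0) * guv ((x + s *\<^sub>R u) + t *\<^sub>R v)"
    using MVT2[OF h, of "\<lambda>r. gu ((x + s *\<^sub>R u) + r *\<^sub>R v)"
        "\<lambda>r. guv ((x + s *\<^sub>R u) + r *\<^sub>R v)"]
      has_pd_along_line[OF guv] by blast
  with s s_eq that show ?thesis by simp
qed

text \<open>The second difference of g is symmetric in u and v; by the mean value theorem it equals
  h^2 guv and h^2 gvu at points that tend to x as h tends to 0.\<close>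

lemma mixed_partials_eq:
  fixes g :: "'a::real_normed_vector \<Rightarrow> real"
  assumes gu: "\<And>z. has_pd g z u (gu z)" and gv: "\<And>z. has_pd g z v (gv z)"
    and guv: "\<And>z. has_pd gu z v (guv z)" and gvu: "\<And>z. has_pd gv z u (gvu z)"
    and cont: "continuous (at x) guv" "continuous (at x) gvu"
  shows "guv x = gvu x"
proof -
  define h :: "nat \<Rightarrow> real" where "h n = inverse (Suc n)" for n
  have h_pos: "0 < h n" for n by (simp add: h_def)
  have h_lim: "h \<longlonglongrightarrow> 0" unfolding h_def by (rule LIMSEQ_inverse_real_of_nat)
  have "\<exists>s t s' t'. 0 < s \<and> s < h n \<and> 0 < t \<and> t < h n \<and> 0 < s' \<and> s' < h n \<and> 0 < t' \<and> t' < h n \<and>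
      guv (x + s *\<^sub>R u + t *\<^sub>R v) = gvu (x + t' *\<^sub>R v + s' *\<^sub>R u)" for n
  proof -
    obtain s t where st_bounds: "0 < s" "s < h n" "0 < t" "t < h n" and st:
      "g (x + h n *\<^sub>R u + h n *\<^sub>R v) - g (x + h n *\<^sub>R u) - g (x + h n *\<^sub>R v) + g x
        = h n * h n * guv (x + s *\<^sub>R u + t *\<^sub>R v)"
      using second_difference_mean_value[OF gu guv h_pos] .
    obtain t' s' where ts_bounds: "0 < t'" "t' < h n" "0 < s'" "s' < h n" and ts:
      "g (x + h n *\<^sub>R v + h n *\<^sub>R u) - g (x + h n *\<^sub>R v) - g (x + h n *\<^sub>R u) + g x
        = h n * h n * gvu (x + t' *\<^sub>R v + s' *\<^sub>R u)"
      using second_difference_mean_value[OF gv gvu h_pos] .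
    have "h n * h n * guv (x + s *\<^sub>R u + t *\<^sub>R v) = h n * h n * gvu (x + t' *\<^sub>R v + s' *\<^sub>R u)"
      using st ts by (simp add: algebra_simps)
    then have "guv (x + s *\<^sub>R u + t *\<^sub>R v) = gvu (x + t' *\<^sub>R v + s' *\<^sub>R u)"
      using h_pos[of n] by simp
    with st_bounds ts_bounds show ?thesis by blast
  qed
  then obtain s t s' t' where bounds: "\<And>n. 0 < s n \<and> s n < h n \<and> 0 < t n \<and> t n < h n \<and>
      0 < s' n \<and> s' n < h n \<and> 0 < t' n \<and> t' n < h n"
    and eq: "\<And>n. guv (x + s n *\<^sub>R u + t n *\<^sub>R v) = gvu (x + t' n *\<^sub>R v + s' n *\<^sub>R u)"
    by metis
  have to_zero: "r \<longlonglongrightarrow> 0" if "\<And>n. 0 < r n \<and> r n < h n" for r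
    using that by (intro real_tendsto_sandwich[OF _ _ tendsto_const h_lim])
      (auto intro!: always_eventually less_imp_le)
  have "(\<lambda>n. x + s n *\<^sub>R u + t n *\<^sub>R v) \<longlonglongrightarrow> x + 0 *\<^sub>R u + 0 *\<^sub>R v"
    using bounds by (intro tendsto_intros to_zero) auto
  then have "(\<lambda>n. guv (x + s n *\<^sub>R u + t n *\<^sub>R v)) \<longlonglongrightarrow> guv x"
    using isCont_tendsto_compose[OF cont(1)] by simp
  moreover have "(\<lambda>n. x + t' n *\<^sub>R v + s' n *\<^sub>R u) \<longlonglongrightarrow> x + 0 *\<^sub>R v + 0 *\<^sub>R u"
    using bounds by (intro tendsto_intros to_zero) auto
  then have "(\<lambda>n. guv (x + s n *\<^sub>R u + t n *\<^sub>R v)) \<longlonglongrightarrow> gvu x"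
    using isCont_tendsto_compose[OF cont(2)] by (simp add: eq)
  ultimately show ?thesis by (rule LIMSEQ_unique)
qed

lemma smooth_pd_commute:
  fixes f :: "'a::real_normed_vector \<Rightarrow> real ^ 'n"
  assumes f: "smooth f"
  shows "pd (\<lambda>z. pd f z u) x v = pd (\<lambda>z. pd f z v) x u"
proof -
  have "pd (\<lambda>z. pd f z u) x v $ i = pd (\<lambda>z. pd f z v) x u $ i" for i
    by (rule mixed_partials_eq[where g = "\<lambda>z. f z $ i" and gu = "\<lambda>z. pd f z u $ i"
          and gv = "\<lambda>z. pd f z v $ i" and guv = "\<lambda>z. pd (\<lambda>z. pd f z u) z v $ i"
          and gvu = "\<lambda>z. pd (\<lambda>z. pd f z v) z u $ i"])
      (auto intro!: has_pd_vec_nth smooth_has_pd smooth_pd f isCont_vec_nth[OF smooth_continuous])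
  then show ?thesis by (simp add: vec_eq_iff)
qed

section \<open>Dirac operators in the variable y\<close>

definition laplacian_y :: "((real, 'k::{finite,linorder}) vec \<Rightarrow> 'k clif) \<Rightarrow> (real, 'k) vec \<Rightarrow> 'k clif" where
  "laplacian_y f y = (\<Sum>k\<in>UNIV. dy k (dy k f) y)"

lemma harmonic_iff_laplacian_y: "harmonic f \<longleftrightarrow> (\<forall>y. laplacian_y f y = 0)"
  by (simp add: harmonic_def laplacian_y_def)

lemma smooth_dy: "smooth f \<Longrightarrow> smooth (dy k f)"
  unfolding dy_def[abs_def] by (rule smooth_pd)

lemma smooth_has_dy: "smooth f \<Longrightarrow> has_pd f y (axis k 1) (dy k f y)"
  unfolding dy_def by (rule smooth_has_pd)

lemma dy_eqI: "has_pd f y (axis k 1) v \<Longrightarrow> dy k f y = v"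
  unfolding dy_def by (rule pd_eqI)

lemma has_pd_dy: "has_pd f y (axis k 1) v \<Longrightarrow> has_pd f y (axis k 1) (dy k f y)"
  by (simp add: dy_eqI)

lemma dy_commute: "smooth f \<Longrightarrow> dy k (dy l f) y = dy l (dy k f) y"
  unfolding dy_def[abs_def] by (rule smooth_pd_commute)

lemma left_dirac_y_eqI:
  assumes "\<And>k. has_pd f y (axis k 1) (v k)"
  shows "left_dirac_y f y = (\<Sum>k\<in>UNIV. gen (Some k) \<odot> v k)"
  using dy_eqI[OF assms] by (simp add: left_dirac_y_def)

lemma right_dirac_y_eqI:
  assumes "\<And>k. has_pd f y (axis k 1) (v k)"
  shows "right_dirac_y f y = (\<Sum>k\<in>UNIV. v k \<odot> gen (Some k))"
  using dy_eqI[OF assms] by (simp add: right_dirac_y_def)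

lemma left_dirac_y_const: "left_dirac_y (\<lambda>z. c) y = 0"
  using left_dirac_y_eqI[OF has_pd_const] by simp

lemma right_dirac_y_const: "right_dirac_y (\<lambda>z. c) y = 0"
  using right_dirac_y_eqI[OF has_pd_const] by simp

lemma left_dirac_y_scaleR:
  assumes "\<And>k. has_pd f y (axis k 1) (v k)"
  shows "left_dirac_y (\<lambda>z. c *\<^sub>R f z) y = c *\<^sub>R left_dirac_y f y"
  using left_dirac_y_eqI[OF has_pd_scaleR[OF assms]] left_dirac_y_eqI[OF assms]
  by (simp add: scaleR_sum_right clmul.scaleR_right)

lemma right_dirac_y_scaleR:
  assumes "\<And>k. has_pd f y (axis k 1) (v k)"
  shows "right_dirac_y (\<lambda>z. c *\<^sub>R f z) y = c *\<^sub>R right_dirac_y f y"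
  using right_dirac_y_eqI[OF has_pd_scaleR[OF assms]] right_dirac_y_eqI[OF assms]
  by (simp add: scaleR_sum_right clmul.scaleR_left)

lemma has_pd_left_dirac_y:
  assumes "smooth f"
  shows "has_pd (left_dirac_y f) y (axis k 1) (left_dirac_y (dy k f) y)"
proof -
  have "has_pd (\<lambda>z. \<Sum>l\<in>UNIV. gen (Some l) \<odot> dy l f z) y (axis k 1)
      (\<Sum>l\<in>UNIV. gen (Some l) \<odot> dy k (dy l f) y)"
    using assms by (intro has_pd_intros smooth_has_dy smooth_dy)
  then show ?thesis
    using assms by (simp add: left_dirac_y_def[abs_def] dy_commute)
qed

lemma has_pd_right_dirac_y:
  assumes "smooth f"
  shows "has_pd (right_dirac_y f) y (axis k 1) (right_dirac_y (dy k f) y)"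
proof -
  have "has_pd (\<lambda>z. \<Sum>l\<in>UNIV. dy l f z \<odot> gen (Some l)) y (axis k 1)
      (\<Sum>l\<in>UNIV. dy k (dy l f) y \<odot> gen (Some l))"
    using assms by (intro has_pd_intros smooth_has_dy smooth_dy)
  then show ?thesis
    using assms by (simp add: right_dirac_y_def[abs_def] dy_commute)
qed

lemma left_dirac_y_left_dirac_y:
  assumes "smooth f"
  shows "left_dirac_y (left_dirac_y f) y = - laplacian_y f y"
proof -
  have "left_dirac_y (left_dirac_y f) y = (\<Sum>k\<in>UNIV. gen (Some k) \<odot> left_dirac_y (dy k f) y)"
    using assms by (intro left_dirac_y_eqI has_pd_left_dirac_y)
  also have "\<dots> = (\<Sum>k\<in>UNIV. \<Sum>l\<in>UNIV. gen (Some k) \<odot> (gen (Some l) \<odot> dy l (dy k f) y))"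
    by (simp add: left_dirac_y_def clmul.sum_right)
  also have "\<dots> = - laplacian_y f y"
    using assms by (simp add: gen_double_sum_left dy_commute laplacian_y_def)
  finally show ?thesis .
qed

lemma right_dirac_y_right_dirac_y:
  assumes "smooth f"
  shows "right_dirac_y (right_dirac_y f) y = - laplacian_y f y"
proof -
  have "right_dirac_y (right_dirac_y f) y = (\<Sum>k\<in>UNIV. right_dirac_y (dy k f) y \<odot> gen (Some k))"
    using assms by (intro right_dirac_y_eqI has_pd_right_dirac_y)
  also have "\<dots> = (\<Sum>k\<in>UNIV. \<Sum>l\<in>UNIV. dy l (dy k f) y \<odot> (gen (Some l) \<odot> gen (Some k)))"
    by (simp add: right_dirac_y_def clmul.sum_left clmul_assoc)
  also have "\<dots> = - laplacian_y f y"
    using assms by (simp add: gen_double_sum_right dy_commute laplacian_y_def)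
  finally show ?thesis .
qed

lemma right_dirac_y_left_dirac_y:
  assumes "smooth f"
  shows "right_dirac_y (left_dirac_y f) y = left_dirac_y (right_dirac_y f) y"
proof -
  have "right_dirac_y (left_dirac_y f) y = (\<Sum>k\<in>UNIV. left_dirac_y (dy k f) y \<odot> gen (Some k))"
    using assms by (intro right_dirac_y_eqI has_pd_left_dirac_y)
  also have "\<dots> = (\<Sum>k\<in>UNIV. \<Sum>l\<in>UNIV. gen (Some l) \<odot> (dy l (dy k f) y \<odot> gen (Some k)))"
    by (simp add: left_dirac_y_def clmul.sum_left clmul_assoc)
  also have "\<dots> = (\<Sum>l\<in>UNIV. gen (Some l) \<odot> right_dirac_y (dy l f) y)"
    using assms by (subst sum.swap) (simp add: right_dirac_y_def clmul.sum_right dy_commute)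
  also have "\<dots> = left_dirac_y (right_dirac_y f) y"
    using assms by (intro left_dirac_y_eqI[symmetric] has_pd_right_dirac_y)
  finally show ?thesis .
qed

section \<open>The functions exp(z) A + exp(conj z) B\<close>

lemma exp_z_eq: "exp_z x0 x1 = exp x0 *\<^sub>R (cos x1 *\<^sub>R clsc 1 + sin x1 *\<^sub>R gen None)"
  by (simp add: exp_z_def clsc_eq_scaleR[of "cos x1"])

lemma exp_zbar_eq: "exp_zbar x0 x1 = exp x0 *\<^sub>R (cos x1 *\<^sub>R clsc 1 - sin x1 *\<^sub>R gen None)"
  by (simp add: exp_zbar_def clsc_eq_scaleR[of "cos x1"])

text \<open>Together with clmul_assoc these rules normalise products: exponentials are moved to the
  front, and e1 in front of the other generators.\<close>

lemma gen_None_clmul_exp_z [simp]: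
  "gen None \<odot> (exp_z x0 x1 \<odot> a) = exp_z x0 x1 \<odot> (gen None \<odot> (a :: ('k::{finite,linorder}) clif))"
  by (simp add: exp_z_eq clmul.add_left clmul.add_right clmul.scaleR_left clmul.scaleR_right)

lemma gen_None_clmul_exp_zbar [simp]:
  "gen None \<odot> (exp_zbar x0 x1 \<odot> a) = exp_zbar x0 x1 \<odot> (gen None \<odot> (a :: ('k::{finite,linorder}) clif))"
  by (simp add: exp_zbar_eq clmul.diff_left clmul.diff_right clmul.scaleR_left clmul.scaleR_right)

lemma gen_Some_clmul_exp_z [simp]:
  "gen (Some k) \<odot> (exp_z x0 x1 \<odot> a) = exp_zbar x0 x1 \<odot> (gen (Some k) \<odot> (a :: ('k::{finite,linorder}) clif))"
  by (simp add: exp_z_eq exp_zbar_eq clmul.add_left clmul.diff_left clmul.add_right clmul.scaleR_left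
      clmul.scaleR_right clmul.minus_right clmul_assoc)

lemma gen_Some_clmul_exp_zbar [simp]:
  "gen (Some k) \<odot> (exp_zbar x0 x1 \<odot> a) = exp_z x0 x1 \<odot> (gen (Some k) \<odot> (a :: ('k::{finite,linorder}) clif))"
  by (simp add: exp_z_eq exp_zbar_eq clmul.add_left clmul.diff_left clmul.diff_right clmul.scaleR_left
      clmul.scaleR_right clmul.minus_right clmul_assoc)

lemma exp_combination_eq_0_iff:
  "(\<forall>x0 x1 y. exp_z x0 x1 \<odot> P y + exp_zbar x0 x1 \<odot> Q y = 0)
    \<longleftrightarrow> (\<forall>y. P y = 0) \<and> (\<forall>y. Q y = (0 :: ('k::{finite,linorder}) clif))"
proof (intro iffI conjI allI)
  fix y
  assume vanish: "\<forall>x0 x1 y. exp_z x0 x1 \<odot> P y + exp_zbar x0 x1 \<odot> Q y = 0"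
  have "P y + Q y = 0"
    using vanish[rule_format, of 0 0 y] by (simp add: exp_z_eq exp_zbar_eq)
  moreover have "gen None \<odot> (P y - Q y) = 0"
    using vanish[rule_format, of 0 "pi / 2" y]
    by (simp add: exp_z_eq exp_zbar_eq clmul.diff_right clmul.minus_left)
  then have "P y = Q y"
    using gen_clmul_gen_self(2)[of None "P y - Q y"] by simp
  ultimately have "P y + P y = 0 + 0" by simp
  then show "P y = 0" by (simp only: add_self_eq_iff)
  with \<open>P y = Q y\<close> show "Q y = 0" by simp
qed simp

abbreviation exp_combination ::
  "((real, 'k::{finite,linorder}) vec \<Rightarrow> 'k clif) \<Rightarrow> ((real, 'k) vec \<Rightarrow> 'k clif) \<Rightarrow> real \<times> real \<times> (real, 'k) vec \<Rightarrow> 'k clif"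
  where "exp_combination A B \<equiv> (\<lambda>(x0, x1, y). exp_z x0 x1 \<odot> A y + exp_zbar x0 x1 \<odot> B y)"

lemma has_vector_derivative_exp_z_x0:
  "((\<lambda>t. exp_z (x0 + t) x1) has_vector_derivative exp_z x0 x1) (at 0)"
  unfolding exp_z_eq by (auto intro!: derivative_eq_intros)

lemma has_vector_derivative_exp_zbar_x0:
  "((\<lambda>t. exp_zbar (x0 + t) x1) has_vector_derivative exp_zbar x0 x1) (at 0)"
  unfolding exp_zbar_eq by (auto intro!: derivative_eq_intros)

lemma has_vector_derivative_exp_z_x1:
  "((\<lambda>t. exp_z x0 (x1 + t)) has_vector_derivative exp_z x0 x1 \<odot> (gen None :: ('k::{finite,linorder}) clif)) (at 0)"
  unfolding exp_z_eq
  by (auto intro!: derivative_eq_intros simp: clmul.add_left clmul.scaleR_left algebra_simps)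

lemma has_vector_derivative_exp_zbar_x1:
  "((\<lambda>t. exp_zbar x0 (x1 + t)) has_vector_derivative - (exp_zbar x0 x1 \<odot> (gen None :: ('k::{finite,linorder}) clif))) (at 0)"
  unfolding exp_zbar_eq
  by (auto intro!: derivative_eq_intros simp: clmul.diff_left clmul.scaleR_left algebra_simps)

lemma pd_exp_combination_x0:
  "pd (exp_combination A B) (x0, x1, y) (1, 0, 0) = exp_z x0 x1 \<odot> A y + exp_zbar x0 x1 \<odot> B y"
  unfolding pd_def
  by (rule vector_derivative_at)
    (auto intro!: has_vector_derivative_add clmul.bounded_linear_left[THEN bounded_linear.has_vector_derivative]
      has_vector_derivative_exp_z_x0 has_vector_derivative_exp_zbar_x0)

lemma pd_exp_combination_x1:
  "pd (exp_combination A B) (x0, x1, y) (0, 1, 0)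
    = exp_z x0 x1 \<odot> (gen None \<odot> A y) - exp_zbar x0 x1 \<odot> (gen None \<odot> B y)"
proof -
  have "((\<lambda>t. exp_z x0 (x1 + t) \<odot> A y) has_vector_derivative (exp_z x0 x1 \<odot> gen None) \<odot> A y) (at 0)"
    "((\<lambda>t. exp_zbar x0 (x1 + t) \<odot> B y) has_vector_derivative - (exp_zbar x0 x1 \<odot> gen None) \<odot> B y) (at 0)"
    by (intro bounded_linear.has_vector_derivative[OF clmul.bounded_linear_left]
        has_vector_derivative_exp_z_x1 has_vector_derivative_exp_zbar_x1)+
  from has_vector_derivative_add[OF this] show ?thesis
    unfolding pd_def by (intro vector_derivative_at) (simp add: clmul_assoc clmul.minus_left)
qed

lemma pd_exp_combination_y:
  assumes "has_pd A y d a" "has_pd B y d b"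
  shows "pd (exp_combination A B) (x0, x1, y) (0, 0, d) = exp_z x0 x1 \<odot> a + exp_zbar x0 x1 \<odot> b"
  using has_pd_add[OF has_pd_clmul_left[OF assms(1)] has_pd_clmul_left[OF assms(2)]]
  unfolding pd_def has_pd_def by (intro vector_derivative_at) simp

lemma left_dirac_exp_combination:
  assumes "\<And>k. has_pd A y (axis k 1) (dy k A y)" "\<And>k. has_pd B y (axis k 1) (dy k B y)"
  shows "left_dirac (exp_combination A B) (x0, x1, y)
    = exp_z x0 x1 \<odot> left_dirac_y B y + exp_zbar x0 x1 \<odot> (2 *\<^sub>R B y + left_dirac_y A y)"
  unfolding left_dirac_def pd_exp_combination_x0 pd_exp_combination_x1 pd_exp_combination_y[OF assms]
    left_dirac_y_def
  by (simp add: clmul.add_right clmul.diff_right clmul.sum_right clmul.minus_right clmul.scaleR_right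
      sum.distrib)
    (simp add: scaleR_conv_of_real)

lemma right_dirac_exp_combination:
  assumes "\<And>k. has_pd A y (axis k 1) (dy k A y)" "\<And>k. has_pd B y (axis k 1) (dy k B y)"
  shows "right_dirac (exp_combination A B) (x0, x1, y)
    = exp_z x0 x1 \<odot> (A y + gen None \<odot> A y \<odot> gen None + right_dirac_y A y)
      + exp_zbar x0 x1 \<odot> (B y - gen None \<odot> B y \<odot> gen None + right_dirac_y B y)"
  unfolding right_dirac_def pd_exp_combination_x0 pd_exp_combination_x1 pd_exp_combination_y[OF assms]
    right_dirac_y_def
  by (simp add: clmul.add_right clmul.diff_right clmul.sum_right clmul.add_left clmul.diff_left
      clmul.sum_left clmul_assoc sum.distrib)

lemma two_sided_monogenic_exp_combination_iff:
  assumes "\<And>k y. has_pd A y (axis k 1) (dy k A y)" "\<And>k y. has_pd B y (axis k 1) (dy k B y)"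
  shows "two_sided_monogenic (exp_combination A B) \<longleftrightarrow>
    (\<forall>y. left_dirac_y B y = 0) \<and> (\<forall>y. 2 *\<^sub>R B y + left_dirac_y A y = 0) \<and>
    (\<forall>y. A y + gen None \<odot> A y \<odot> gen None + right_dirac_y A y = 0) \<and>
    (\<forall>y. B y - gen None \<odot> B y \<odot> gen None + right_dirac_y B y = 0)"
  unfolding two_sided_monogenic_def split_paired_All
  by (simp add: left_dirac_exp_combination right_dirac_exp_combination assms exp_combination_eq_0_iff)

text \<open>Apply the left Dirac operator to the equation for A, using D (A D) = (D A) D = - 2 B D.\<close>

lemma half_left_dirac_y_right_equation:
  assumes A: "smooth A" and eqA: "\<And>y. A y + gen None \<odot> A y \<odot> gen None + right_dirac_y A y = 0"
  defines "B \<equiv> \<lambda>y. - ((1/2) *\<^sub>R left_dirac_y A y)"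
  shows "B y - gen None \<odot> B y \<odot> gen None + right_dirac_y B y = 0"
proof -
  have "left_dirac_y (\<lambda>y. A y + gen None \<odot> A y \<odot> gen None + right_dirac_y A y) y = 0"
    using eqA left_dirac_y_const[of 0] by simp
  moreover have "left_dirac_y (\<lambda>y. A y + gen None \<odot> A y \<odot> gen None + right_dirac_y A y) y
      = left_dirac_y A y - gen None \<odot> left_dirac_y A y \<odot> gen None + left_dirac_y (right_dirac_y A) y"
    using left_dirac_y_eqI[OF has_pd_add[OF has_pd_add[OF smooth_has_dy[OF A]
          has_pd_clmul_right[OF has_pd_clmul_left[OF smooth_has_dy[OF A]]]] has_pd_right_dirac_y[OF A]]]
      left_dirac_y_eqI[OF has_pd_right_dirac_y[OF A]]
    by (simp add: left_dirac_y_def clmul.add_right clmul.diff_right clmul.sum_left clmul.sum_right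
        clmul_assoc sum.distrib sum_subtractf sum_negf)
  moreover have "right_dirac_y B y = - ((1/2) *\<^sub>R left_dirac_y (right_dirac_y A) y)"
    using right_dirac_y_scaleR[OF has_pd_left_dirac_y[OF A], where c = "- (1/2)"]
    by (simp add: B_def right_dirac_y_left_dirac_y[OF A])
  ultimately show ?thesis
    unfolding B_def
    by (simp add: clmul.minus_left clmul.minus_right clmul.scaleR_left clmul.scaleR_right clmul_assoc
        algebra_simps)
qed

lemma left_dirac_y_half_left_dirac_y:
  assumes "smooth A"
  shows "left_dirac_y (\<lambda>y. - ((1/2) *\<^sub>R left_dirac_y A y)) y = (1/2) *\<^sub>R laplacian_y A y"
  using left_dirac_y_scaleR[OF has_pd_left_dirac_y[OF assms], where c = "- (1/2)"]
  by (simp add: left_dirac_y_left_dirac_y[OF assms])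

lemma two_sided_monogenic_exp_combination_harmonic:
  assumes A: "smooth A" and "harmonic A"
    and eqA: "\<And>y. A y + gen None \<odot> A y \<odot> gen None + right_dirac_y A y = 0"
  shows "two_sided_monogenic (exp_combination A (\<lambda>y. - ((1/2) *\<^sub>R left_dirac_y A y)))"
proof -
  have "has_pd (\<lambda>y. - ((1/2) *\<^sub>R left_dirac_y A y)) y (axis k 1)
      (dy k (\<lambda>y. - ((1/2) *\<^sub>R left_dirac_y A y)) y)" for k y
    by (rule has_pd_dy[OF has_pd_minus[OF has_pd_scaleR[OF has_pd_left_dirac_y[OF A]]]])
  then show ?thesis
    using \<open>harmonic A\<close> eqA half_left_dirac_y_right_equation[OF A eqA]
    by (simp add: two_sided_monogenic_exp_combination_iff[OF smooth_has_dy[OF A]]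
        left_dirac_y_half_left_dirac_y[OF A] harmonic_iff_laplacian_y scaleR_2[symmetric])
qed

lemma two_sided_monogenic_exp_combination:
  assumes A: "smooth A" and B: "smooth B"
  shows "two_sided_monogenic (exp_combination A B) \<longleftrightarrow>
    harmonic A \<and> (\<forall>y. A y + gen None \<odot> A y \<odot> gen None + right_dirac_y A y = 0) \<and>
    (\<forall>y. left_dirac_y B y = 0) \<and> (\<forall>y. B y = - ((1/2) *\<^sub>R left_dirac_y A y))"
proof
  assume "two_sided_monogenic (exp_combination A B)"
  then have eqs: "\<forall>y. left_dirac_y B y = 0" "\<forall>y. 2 *\<^sub>R B y + left_dirac_y A y = 0"
    "\<forall>y. A y + gen None \<odot> A y \<odot> gen None + right_dirac_y A y = 0"
    by (simp_all add: two_sided_monogenic_exp_combination_iff smooth_has_dy A B)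
  have "B y = - ((1/2) *\<^sub>R left_dirac_y A y)" for y
  proof -
    have "2 *\<^sub>R B y = - left_dirac_y A y"
      using eqs(2) by (simp add: eq_neg_iff_add_eq_0)
    then have "(1/2) *\<^sub>R (2 *\<^sub>R B y) = (1/2) *\<^sub>R (- left_dirac_y A y)"
      by (rule arg_cong)
    then show ?thesis by simp
  qed
  then have B_eq: "B = (\<lambda>y. - ((1/2) *\<^sub>R left_dirac_y A y))" ..
  then have "harmonic A"
    using eqs(1) by (simp add: harmonic_iff_laplacian_y left_dirac_y_half_left_dirac_y[OF A])
  with eqs B_eq show "harmonic A \<and> (\<forall>y. A y + gen None \<odot> A y \<odot> gen None + right_dirac_y A y = 0) \<and>
    (\<forall>y. left_dirac_y B y = 0) \<and> (\<forall>y. B y = - ((1/2) *\<^sub>R left_dirac_y A y))"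
    by simp
next
  assume H: "harmonic A \<and> (\<forall>y. A y + gen None \<odot> A y \<odot> gen None + right_dirac_y A y = 0) \<and>
    (\<forall>y. left_dirac_y B y = 0) \<and> (\<forall>y. B y = - ((1/2) *\<^sub>R left_dirac_y A y))"
  then have "B = (\<lambda>y. - ((1/2) *\<^sub>R left_dirac_y A y))" by (simp add: fun_eq_iff)
  then show "two_sided_monogenic (exp_combination A B)"
    using H by (simp add: two_sided_monogenic_exp_combination_harmonic[OF A])
qed

lemma two_sided_monogenic_of_right_monogenic:
  assumes M: "smooth M" and RM: "\<And>y. right_dirac_y M y = 0"
  shows "two_sided_monogenic (\<lambda>(x0, x1, y).
    exp_z x0 x1 \<odot> (M y - gen None \<odot> M y \<odot> gen None)
    - (1/2) *\<^sub>R (exp_zbar x0 x1 \<odot> (left_dirac_y M y + gen None \<odot> left_dirac_y M y \<odot> gen None)))"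
proof -
  define A where "A y = M y - gen None \<odot> M y \<odot> gen None" for y
  have A: "smooth A"
    unfolding A_def[abs_def]
    by (intro smooth_bounded_linear[OF _ M] bounded_linear_sub bounded_linear_ident
        bounded_linear_compose[OF clmul.bounded_linear_left clmul.bounded_linear_right])
  have dA: "has_pd A y (axis k 1) (dy k M y - gen None \<odot> dy k M y \<odot> gen None)" for y k
    unfolding A_def[abs_def] using M by (intro has_pd_intros smooth_has_dy)
  have LA: "left_dirac_y A y = left_dirac_y M y + gen None \<odot> left_dirac_y M y \<odot> gen None" for y
    by (subst left_dirac_y_eqI[OF dA])
      (simp add: left_dirac_y_def clmul.diff_right clmul.sum_left clmul.sum_right clmul_assoc
        sum_subtractf sum_negf sum.distrib)
  have "right_dirac_y A y = right_dirac_y M y + gen None \<odot> right_dirac_y M y \<odot> gen None" for y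
    by (subst right_dirac_y_eqI[OF dA])
      (simp add: right_dirac_y_def clmul.diff_left clmul.sum_left clmul.sum_right clmul_assoc
        clmul.minus_right sum_subtractf sum_negf sum.distrib)
  then have RA: "right_dirac_y A = (\<lambda>y. 0)"
    by (simp add: RM fun_eq_iff)
  have eqA: "A y + gen None \<odot> A y \<odot> gen None + right_dirac_y A y = 0" for y
    by (simp add: A_def RA clmul.diff_right clmul.diff_left clmul.add_left clmul_assoc
        clmul.minus_right)
  have "harmonic A"
    using right_dirac_y_right_dirac_y[OF A]
    by (simp add: harmonic_iff_laplacian_y RA right_dirac_y_const)
  have "(\<lambda>(x0, x1, y). exp_z x0 x1 \<odot> (M y - gen None \<odot> M y \<odot> gen None)
      - (1/2) *\<^sub>R (exp_zbar x0 x1 \<odot> (left_dirac_y M y + gen None \<odot> left_dirac_y M y \<odot> gen None)))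
    = exp_combination A (\<lambda>y. - ((1/2) *\<^sub>R left_dirac_y A y))"
    by (auto simp: A_def LA clmul.scaleR_right clmul.minus_right)
  then show ?thesis
    using two_sided_monogenic_exp_combination_harmonic[OF A \<open>harmonic A\<close> eqA] by simp
qed

theorem theorem1:
  fixes dummy :: "'k::{finite,linorder} itself"
  shows "(\<forall>(A :: (real, 'k) vec \<Rightarrow> 'k clif) (B :: (real, 'k) vec \<Rightarrow> 'k clif).
            smooth A \<longrightarrow> smooth B \<longrightarrow>
            (two_sided_monogenic (\<lambda>(x0, x1, y). exp_z x0 x1 \<odot> A y + exp_zbar x0 x1 \<odot> B y)
             \<longleftrightarrow> (harmonic A
                  \<and> (\<forall>y. A y + gen None \<odot> A y \<odot> gen None + right_dirac_y A y = 0)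
                  \<and> (\<forall>y. left_dirac_y B y = 0)
                  \<and> (\<forall>y. B y = - ((1/2) *\<^sub>R left_dirac_y A y)))))
       \<and> (\<forall>M :: (real, 'k) vec \<Rightarrow> 'k clif.
            smooth M \<longrightarrow> (\<forall>y. right_dirac_y M y = 0) \<longrightarrow>
            two_sided_monogenic (\<lambda>(x0, x1, y).
               exp_z x0 x1 \<odot> (M y - gen None \<odot> M y \<odot> gen None)
               - (1/2) *\<^sub>R (exp_zbar x0 x1 \<odot>
                   (left_dirac_y M y + gen None \<odot> left_dirac_y M y \<odot> gen None))))"
  by (simp add: two_sided_monogenic_exp_combination two_sided_monogenic_of_right_monogenic)

end
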